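(* Let $n\ge 2$ and let $k_1,\dots,k_n$, $a_1,\dots,a_{n-1}$, $b_1,\dots,b_n$ be real or complex numbers ($3n-1$ parameters). Let $A_1$ be the $n\times n$ matrix with entries $$(A_1)_{ij}=\begin{cases} k_i b_j, & i\le j,\\ k_j a_j, & i>j.\end{cases}$$ Define $c_i=k_{i+1}b_i-k_ia_i$ for $i=1,\dots,n-1$, $c_0=1$, $c_n=b_n$; $d_i=k_{i+1}a_{i+1}b_i-k_ia_ib_{i+1}$ for $i=1,\dots,n-2$, $d_0=a_1$; $f_i=a_i-b_i$ for $i=2,\dots,n-1$; $g_i=k_{i+1}-k_i$ for $i=2,\dots,n-1$, $g_n=1$. Assume $k_1\neq 0$ and $c_i\neq 0$ for $i=1,\dots,n$. Then $A_1$ is invertible and its inverse $A_1^{-1}=[\alpha_{ij}]$ is the lower Hessenberg matrix with entries $$\alpha_{ij}=\begin{cases} \dfrac{k_{i+1}b_{i-1}-k_{i-1}a_{i-1}}{c_{i-1}c_i}, & i=j,\ i\neq 1,n,\\[2mm] \dfrac{k_2}{k_1c_1}, & i=j=1,\\[2mm] \dfrac{b_{n-1}}{c_{n-1}c_n}, & i=j=n,\\[2mm] (-1)^{i+j}\dfrac{d_{j-1}\,g_i\prod_{\nu=j+1}^{i-1}k_\nu f_\nu}{\prod_{\nu=j-1}^{i}c_\nu}, & i-j\ge 1,\\[2mm] -\dfrac{1}{c_i}, & j-i=1,\\[2mm] 0, & j-i>1, \end{cases}$$ where the empty product $\prod_{\nu=j+1}^{i-1}k_\nu f_\nu$ (case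 $i=j+1$) is taken to be $1$.
   Context: A lower Hessenberg matrix is a square matrix whose entries $(i,j)$ vanish whenever $j-i>1$. *)

theory Defs
  imports "Jordan_Normal_Form.Matrix"
begin

text \<open>All parameter sequences k, a, b are 1-indexed functions nat => 'a.
  Matrices are Jordan_Normal_Form matrices with 0-based indices; the
  paper's entry (i,j) (1-based) is stored at position (i-1,j-1).\<close>

definition A1_mat :: "nat \<Rightarrow> (nat \<Rightarrow> 'a::field) \<Rightarrow> (nat \<Rightarrow> 'a) \<Rightarrow> (nat \<Rightarrow> 'a) \<Rightarrow> 'a mat" where
  "A1_mat n k a b = mat n n (\<lambda>(i, j). let i' = i + 1; j' = j + 1 in
      if i' \<le> j' then k i' * b j' else k j' * a j')"

definition cc :: "nat \<Rightarrow> (nat \<Rightarrow> 'a::field) \<Rightarrow> (nat \<Rightarrow> 'a) \<Rightarrow> (nat \<Rightarrow> 'a) \<Rightarrow> nat \<Rightarrow> 'a" where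
  "cc n k a b i = (if i = 0 then 1 else if i = n then b n
                   else k (i + 1) * b i - k i * a i)"

definition dd :: "(nat \<Rightarrow> 'a::field) \<Rightarrow> (nat \<Rightarrow> 'a) \<Rightarrow> (nat \<Rightarrow> 'a) \<Rightarrow> nat \<Rightarrow> 'a" where
  "dd k a b i = (if i = 0 then a 1
                 else k (i + 1) * a (i + 1) * b i - k i * a i * b (i + 1))"

definition ff :: "(nat \<Rightarrow> 'a::field) \<Rightarrow> (nat \<Rightarrow> 'a) \<Rightarrow> nat \<Rightarrow> 'a" where
  "ff a b i = a i - b i"

definition gg :: "nat \<Rightarrow> (nat \<Rightarrow> 'a::field) \<Rightarrow> nat \<Rightarrow> 'a" where
  "gg n k i = (if i = n then 1 else k (i + 1) - k i)"

definition alpha :: "nat \<Rightarrow> (nat \<Rightarrow> 'a::field) \<Rightarrow> (nat \<Rightarrow> 'a) \<Rightarrow> (nat \<Rightarrow> 'a) \<Rightarrow> nat \<Rightarrow> nat \<Rightarrow> 'a" where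
  "alpha n k a b i j =
    (if i = j then
       (if i = 1 then k 2 / (k 1 * cc n k a b 1)
        else if i = n then b (n - 1) / (cc n k a b (n - 1) * cc n k a b n)
        else (k (i + 1) * b (i - 1) - k (i - 1) * a (i - 1))
               / (cc n k a b (i - 1) * cc n k a b i))
     else if j < i then
       (-1) ^ (i + j) * dd k a b (j - 1) * gg n k i
         * (\<Prod>\<nu>\<in>{j + 1..i - 1}. k \<nu> * ff a b \<nu>)
         / (\<Prod>\<nu>\<in>{j - 1..i}. cc n k a b \<nu>)
     else if j = i + 1 then - 1 / cc n k a b i
     else 0)"

definition alpha_mat :: "nat \<Rightarrow> (nat \<Rightarrow> 'a::field) \<Rightarrow> (nat \<Rightarrow> 'a) \<Rightarrow> (nat \<Rightarrow> 'a) \<Rightarrow> 'a mat" where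
  "alpha_mat n k a b = mat n n (\<lambda>(i, j). alpha n k a b (i + 1) (j + 1))"

end

theory Submission
  imports Defs "Jordan_Normal_Form.Determinant"
begin

text \<open>Row i of A1 times column j of the claimed inverse splits as H + k_i T, with head
  H = sum_{l<i} k_l a_l alpha_{lj} and tail T = sum_{l>=i} b_l alpha_{lj}. Below the diagonal
  alpha_{mj} = g_m t_{jm} / c_m, where t_{j,m+1} = -k_m f_m t_{jm} / c_m. The identities
  b_m g_m - k_m f_m = c_m and a_m g_m - c_m = k_{m+1} f_m give T = t_{ji} by downward and
  H = -k_i t_{ji} by upward induction on i, so the two parts cancel. On and above the diagonal
  only alpha_{j-1,j} = -1/c_{j-1} and alpha_{jj} contribute, and they produce 1 resp. 0.
  Finally, a right inverse of a square matrix over a field is a two-sided inverse.\<close>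

lemma right_inverse_imp_invertible_mat:
  fixes A B :: "'a::field mat"
  assumes A: "A \<in> carrier_mat n n" and B: "B \<in> carrier_mat n n" and AB: "A * B = 1\<^sub>m n"
  shows "invertible_mat A \<and> inverts_mat A B \<and> inverts_mat B A"
proof -
  have "B * A = 1\<^sub>m n" by (rule mat_mult_left_right_inverse[OF A B AB])
  then have "inverts_mat A B" "inverts_mat B A"
    using A B AB by (simp_all add: inverts_mat_def)
  then show ?thesis using A by (auto simp: invertible_mat_def)
qed

lemma index_A1_mat_mult:
  fixes \<beta> :: "nat \<Rightarrow> nat \<Rightarrow> 'a::field"
  assumes i: "1 \<le> i" "i \<le> n" and j: "1 \<le> j" "j \<le> m"
  shows "(A1_mat n k a b * mat n m (\<lambda>(p, q). \<beta> (p + 1) (q + 1))) $$ (i - 1, j - 1)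
       = (\<Sum>l\<in>{1..<i}. k l * a l * \<beta> l j) + k i * (\<Sum>l\<in>{i..n}. b l * \<beta> l j)"
proof -
  let ?A = "\<lambda>l. if i \<le> l then k i * b l else k l * a l"
  have "(A1_mat n k a b * mat n m (\<lambda>(p, q). \<beta> (p + 1) (q + 1))) $$ (i - 1, j - 1)
      = (\<Sum>l = 0..<n. ?A (Suc l) * \<beta> (Suc l) j)"
    using i j by (auto simp: A1_mat_def scalar_prod_def Let_def intro!: sum.cong)
  also have "\<dots> = (\<Sum>l\<in>{1..n}. ?A l * \<beta> l j)"
    by (simp add: sum.atLeast1_atMost_eq atLeast0LessThan)
  also have "{1..n} = {1..<i} \<union> {i..n}"
    using i by auto
  also have "(\<Sum>l\<in>{1..<i} \<union> {i..n}. ?A l * \<beta> l j)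
      = (\<Sum>l\<in>{1..<i}. ?A l * \<beta> l j) + (\<Sum>l\<in>{i..n}. ?A l * \<beta> l j)"
    by (rule sum.union_disjoint) auto
  finally show ?thesis
    by (simp add: sum_distrib_left mult.assoc)
qed

locale A1_params =
  fixes n :: nat and k a b :: "nat \<Rightarrow> 'a::field"
begin

abbreviation "c \<equiv> cc n k a b"
abbreviation "d \<equiv> dd k a b"
abbreviation "f \<equiv> ff a b"
abbreviation "g \<equiv> gg n k"
abbreviation "\<alpha> \<equiv> alpha n k a b"

definition alpha_tail :: "nat \<Rightarrow> nat \<Rightarrow> 'a" where
  "alpha_tail j m = (-1) ^ (m + j) * d (j - 1) * (\<Prod>\<nu>\<in>{j + 1..m - 1}. k \<nu> * f \<nu>)
     / (\<Prod>\<nu>\<in>{j - 1..m - 1}. c \<nu>)"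

lemma alpha_below:
  assumes "1 \<le> j" "j < i"
  shows "\<alpha> i j = g i * alpha_tail j i / c i"
proof -
  have "(\<Prod>\<nu>\<in>{j - 1..i}. c \<nu>) = (\<Prod>\<nu>\<in>{j - 1..i - 1}. c \<nu>) * c i"
    using assms prod.cl_ivl_Suc[of c "j - 1" "i - 1"] by simp
  then show ?thesis
    using assms by (simp add: alpha_def alpha_tail_def field_simps)
qed

lemma alpha_tail_Suc:
  assumes "1 \<le> j" "j < m"
  shows "alpha_tail j (Suc m) = - k m * f m * alpha_tail j m / c m"
proof -
  have "(\<Prod>\<nu>\<in>{j - 1..m}. c \<nu>) = (\<Prod>\<nu>\<in>{j - 1..m - 1}. c \<nu>) * c m"
    using assms prod.cl_ivl_Suc[of c "j - 1" "m - 1"] by simp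
  moreover have "(\<Prod>\<nu>\<in>{j + 1..m}. k \<nu> * f \<nu>) = (\<Prod>\<nu>\<in>{j + 1..m - 1}. k \<nu> * f \<nu>) * (k m * f m)"
    using assms prod.cl_ivl_Suc[of "\<lambda>\<nu>. k \<nu> * f \<nu>" "j + 1" "m - 1"] by simp
  ultimately show ?thesis
    by (simp add: alpha_tail_def field_simps)
qed

lemma alpha_tail_first:
  assumes "1 \<le> j"
  shows "alpha_tail j (Suc j) = - d (j - 1) / (c (j - 1) * c j)"
proof -
  have "{j - 1..j} = {j - 1, j}"
    using assms by auto
  then show ?thesis
    using assms by (simp add: alpha_tail_def)
qed

lemma alpha_above: "l + 1 < j \<Longrightarrow> \<alpha> l j = 0"
  by (simp add: alpha_def)

lemma alpha_superdiag: "\<alpha> l (Suc l) = - 1 / c l"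
  by (simp add: alpha_def)

lemma c_interior: "0 < i \<Longrightarrow> i < n \<Longrightarrow> c i = k (Suc i) * b i - k i * a i"
  by (simp add: cc_def)

lemma b_g_minus_k_f: "0 < i \<Longrightarrow> i < n \<Longrightarrow> b i * g i - k i * f i = c i"
  by (simp add: c_interior gg_def ff_def algebra_simps)

lemma a_g_minus_c: "0 < i \<Longrightarrow> i < n \<Longrightarrow> a i * g i - c i = k (Suc i) * f i"
  by (simp add: c_interior gg_def ff_def algebra_simps)

lemma sum_k_a_alpha_superdiag:
  assumes "1 \<le> i"
  shows "(\<Sum>l\<in>{1..i}. k l * a l * \<alpha> l (Suc i)) = - k i * a i / c i"
proof -
  have "(\<Sum>l\<in>{1..<i}. k l * a l * \<alpha> l (Suc i)) = 0"
    by (rule sum.neutral) (auto simp: alpha_above)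
  then show ?thesis
    using assms by (simp add: atLeastLessThanSuc_atLeastAtMost[symmetric] alpha_superdiag)
qed

lemma sum_b_alpha_above:
  assumes "i \<le> m"
  shows "(\<Sum>l\<in>{i..n}. b l * \<alpha> l (Suc m)) = (\<Sum>l\<in>{m..n}. b l * \<alpha> l (Suc m))"
proof (cases "m \<le> n")
  case True
  have split: "{i..n} = {i..<m} \<union> {m..n}"
    using assms True by auto
  have "(\<Sum>l\<in>{i..<m}. b l * \<alpha> l (Suc m)) = 0"
    by (rule sum.neutral) (auto simp: alpha_above)
  then show ?thesis
    unfolding split by (subst sum.union_disjoint) auto
next
  case False
  then show ?thesis
    by (auto intro!: sum.neutral simp: alpha_above)
qed

end

locale A1_inverse = A1_params +
  assumes n_ge_2: "2 \<le> n" and k1_nonzero: "k 1 \<noteq> 0"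
    and c_nonzero_ivl: "\<forall>i\<in>{1..n}. cc n k a b i \<noteq> 0"
begin

lemma c_nonzero: "i \<le> n \<Longrightarrow> c i \<noteq> 0"
  using c_nonzero_ivl by (cases "i = 0") (auto simp: cc_def)

lemma sum_b_alpha_below:
  assumes "1 \<le> j" "j < m" "m \<le> n"
  shows "(\<Sum>l\<in>{m..n}. b l * \<alpha> l j) = alpha_tail j m"
  using \<open>m \<le> n\<close> \<open>j < m\<close>
proof (induction m rule: inc_induct)
  case base
  have "c n = b n" "g n = 1"
    using n_ge_2 by (simp_all add: cc_def gg_def)
  then show ?case
    using alpha_below[OF \<open>1 \<le> j\<close> base] c_nonzero[of n] by simp
next
  case (step m)
  have "(\<Sum>l\<in>{m..n}. b l * \<alpha> l j) = b m * \<alpha> m j + alpha_tail j (Suc m)"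
    using step by (simp add: sum.atLeast_Suc_atMost)
  also have "\<dots> = (b m * g m - k m * f m) * alpha_tail j m / c m"
    using alpha_below[OF \<open>1 \<le> j\<close> step.prems] alpha_tail_Suc[OF \<open>1 \<le> j\<close> step.prems]
    by (simp add: diff_divide_distrib algebra_simps)
  also have "\<dots> = alpha_tail j m"
    using step c_nonzero[of m] by (simp add: b_g_minus_k_f)
  finally show ?case .
qed

lemma sum_k_a_alpha_subdiag:
  assumes "1 \<le> j" "j < n"
  shows "(\<Sum>l\<in>{1..j}. k l * a l * \<alpha> l j) = - k (Suc j) * alpha_tail j (Suc j)"
proof (cases "j = 1")
  case True
  have "\<alpha> 1 1 = k 2 / (k 1 * c 1)"
    by (simp add: alpha_def)
  moreover have "alpha_tail 1 2 = - a 1 / c 1"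
    using alpha_tail_first[of 1] by (simp add: cc_def dd_def numeral_2_eq_2)
  ultimately show ?thesis
    using True k1_nonzero by (simp add: numeral_2_eq_2)
next
  case False
  then obtain i where j: "j = Suc i" and i: "1 \<le> i"
    using assms by (cases j) auto
  define X where "X = k (Suc j) * b i - k i * a i"
  have \<alpha>jj: "\<alpha> j j = X / (c i * c j)"
    using j i assms by (simp add: alpha_def X_def)
  have "(\<Sum>l\<in>{1..j}. k l * a l * \<alpha> l j) = - k i * a i / c i + k j * a j * \<alpha> j j"
    using j i sum_k_a_alpha_superdiag[OF i] by simp
  also have "\<dots> = (k j * a j * X - k i * a i * c j) / (c i * c j)"
    using j assms c_nonzero[of i] c_nonzero[of j] \<alpha>jj by (simp add: field_simps)
  also have "k j * a j * X - k i * a i * c j = k (Suc j) * d i"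
    using j i assms by (simp add: X_def cc_def dd_def algebra_simps)
  finally show ?thesis
    using j i alpha_tail_first[OF assms(1)] by simp
qed

lemma sum_k_a_alpha_below:
  assumes "1 \<le> j" "j < i" "i \<le> n"
  shows "(\<Sum>l\<in>{1..<i}. k l * a l * \<alpha> l j) = - k i * alpha_tail j i"
  using Suc_leI[OF \<open>j < i\<close>] \<open>i \<le> n\<close>
proof (induction i rule: dec_induct)
  case base
  then show ?case
    using sum_k_a_alpha_subdiag[OF \<open>1 \<le> j\<close>] by (simp add: atLeastLessThanSuc_atLeastAtMost)
next
  case (step m)
  then have m: "j < m" "m < n"
    by auto
  have "(\<Sum>l\<in>{1..<Suc m}. k l * a l * \<alpha> l j) = - k m * alpha_tail j m + k m * a m * \<alpha> m j"
    using step m by simp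
  also have "\<dots> = k m * (a m * g m - c m) * alpha_tail j m / c m"
    using alpha_below[OF \<open>1 \<le> j\<close> m(1)] c_nonzero[of m] m by (simp add: field_simps)
  also have "\<dots> = - k (Suc m) * alpha_tail j (Suc m)"
    using alpha_tail_Suc[OF \<open>1 \<le> j\<close> m(1)] m by (simp add: a_g_minus_c)
  finally show ?case .
qed

lemma sum_b_alpha_superdiag:
  assumes i: "1 \<le> i" "i < n"
  shows "(\<Sum>l\<in>{Suc i..n}. b l * \<alpha> l (Suc i)) = b i / c i"
proof (cases "Suc i = n")
  case True
  have "c n = b n" "n - 1 = i"
    using n_ge_2 True by (simp_all add: cc_def)
  then show ?thesis
    using True i c_nonzero[of n] by (simp add: alpha_def)
next
  case False
  define j where "j = Suc i"
  define X where "X = k (Suc j) * b i - k i * a i"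
  have j: "1 \<le> j" "j < n"
    using i False by (simp_all add: j_def)
  have "\<alpha> j j = X / (c i * c j)"
    using j i by (simp add: alpha_def X_def j_def)
  then have "(\<Sum>l\<in>{j..n}. b l * \<alpha> l j) = b j * X / (c i * c j) - d i / (c i * c j)"
    using j sum_b_alpha_below[of j "Suc j"] alpha_tail_first[of j]
    by (simp add: sum.atLeast_Suc_atMost j_def)
  also have "\<dots> = (b j * X - d i) / (c i * c j)"
    by (simp add: diff_divide_distrib)
  also have "b j * X - d i = b i * c j"
    using i j by (simp add: X_def j_def cc_def dd_def algebra_simps)
  finally show ?thesis
    using c_nonzero[of j] j by (simp add: j_def)
qed

lemma sum_b_alpha_first: "(\<Sum>l\<in>{1..n}. b l * \<alpha> l 1) = 1 / k 1"
proof -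
  have c1: "c 1 = k 2 * b 1 - k 1 * a 1"
    using n_ge_2 by (simp add: cc_def numeral_2_eq_2)
  have "alpha_tail 1 2 = - a 1 / c 1"
    using alpha_tail_first[of 1] by (simp add: cc_def dd_def numeral_2_eq_2)
  then have "(\<Sum>l\<in>{1..n}. b l * \<alpha> l 1) = b 1 * (k 2 / (k 1 * c 1)) - a 1 / c 1"
    using n_ge_2 sum_b_alpha_below[of 1 2]
    by (simp add: sum.atLeast_Suc_atMost alpha_def numeral_2_eq_2)
  also have "\<dots> = (k 2 * b 1 - k 1 * a 1) / (k 1 * c 1)"
    using k1_nonzero c_nonzero[of 1] n_ge_2 by (simp add: field_simps)
  finally show ?thesis
    using c1 c_nonzero[of 1] n_ge_2 by simp
qed

lemma row_times_column:
  assumes i: "1 \<le> i" "i \<le> n" and j: "1 \<le> j" "j \<le> n"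
  shows "(\<Sum>l\<in>{1..<i}. k l * a l * \<alpha> l j) + k i * (\<Sum>l\<in>{i..n}. b l * \<alpha> l j)
       = (if i = j then 1 else 0)"
proof -
  consider "j < i" | "i = j" "j = 1" | "i = j" "j \<noteq> 1" | "i < j"
    by linarith
  then show ?thesis
  proof cases
    case 1
    then show ?thesis
      using sum_k_a_alpha_below[OF j(1) 1 i(2)] sum_b_alpha_below[OF j(1) 1 i(2)] by simp
  next
    case 2
    then show ?thesis
      using sum_b_alpha_first k1_nonzero by simp
  next
    case 3
    then obtain p where p: "j = Suc p" "1 \<le> p" "p < n"
      using j by (cases j) auto
    have "- k p * a p / c p + k (Suc p) * (b p / c p) = (k (Suc p) * b p - k p * a p) / c p"
      by (simp add: diff_divide_distrib)
    also have "\<dots> = 1"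
      using p c_nonzero[of p] by (simp add: c_interior)
    finally show ?thesis
      using 3 p sum_k_a_alpha_superdiag[of p] sum_b_alpha_superdiag[of p]
      by (simp add: atLeastLessThanSuc_atLeastAtMost)
  next
    case 4
    then obtain p where p: "j = Suc p" "i \<le> p" "p < n"
      using j by (cases j) auto
    have "(\<Sum>l\<in>{1..<i}. k l * a l * \<alpha> l j) = 0"
      by (rule sum.neutral) (use 4 in \<open>auto simp: alpha_above\<close>)
    moreover have "(\<Sum>l\<in>{i..n}. b l * \<alpha> l j) = 0"
      using p i sum_b_alpha_above[OF p(2)] sum_b_alpha_superdiag[of p]
      by (simp add: sum.atLeast_Suc_atMost alpha_superdiag)
    ultimately show ?thesis
      using 4 by simp
  qed
qed

lemma A1_mat_mult_alpha_mat: "A1_mat n k a b * alpha_mat n k a b = 1\<^sub>m n"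
proof (rule eq_matI)
  fix i j
  assume "i < dim_row (1\<^sub>m n :: 'a mat)" "j < dim_col (1\<^sub>m n :: 'a mat)"
  then have "i < n" "j < n"
    by auto
  then show "(A1_mat n k a b * alpha_mat n k a b) $$ (i, j) = 1\<^sub>m n $$ (i, j)"
    using index_A1_mat_mult[of "Suc i" n "Suc j" n k a b \<alpha>] row_times_column[of "Suc i" "Suc j"]
    by (simp add: alpha_mat_def)
qed (simp_all add: A1_mat_def alpha_mat_def)

end

theorem mainTheorem1:
  fixes n :: nat and k a b :: "nat \<Rightarrow> 'a::field"
  assumes "n \<ge> 2"
    and "k 1 \<noteq> 0"
    and "\<forall>i\<in>{1..n}. cc n k a b i \<noteq> 0"
  shows "invertible_mat (A1_mat n k a b)
         \<and> inverts_mat (A1_mat n k a b) (alpha_mat n k a b)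
         \<and> inverts_mat (alpha_mat n k a b) (A1_mat n k a b)"
proof -
  interpret A1_inverse n k a b
    using assms by unfold_locales
  show ?thesis
    by (rule right_inverse_imp_invertible_mat[OF _ _ A1_mat_mult_alpha_mat])
      (simp_all add: A1_mat_def alpha_mat_def)
qed

end
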